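(* There exists an instance with three agents $N=\{1,2,3\}$ and a finite item set $A$ in which all values $V_i(j,a)$ are nonnegative, together with a complete allocation that is envy-free but satisfies neither PROP-Max nor PROP-Ave.
   Context: Setting: agents $N=\{1,\dots,n\}$, finite item set $A$; a complete allocation $\pi$ partitions $A$ into bundles $\pi_1,\dots,\pi_n$; $\pi(a)$ is the agent receiving $a$; $V_i(j,a)\in\mathbb{R}$ is agent $i$'s value when item $a$ goes to agent $j$; $V_i(\pi)=\sum_{a\in A}V_i(\pi(a),a)$. $\pi^{i\leftrightarrow j}$ is $\pi$ with bundles of $i$ and $j$ swapped. $\pi$ is envy-free if there are no $i,j$ with $V_i(\pi^{i\leftrightarrow j})>V_i(\pi)$. With $V_i^{max}(a)=\max_{j\in N}V_i(j,a)$, $\pi$ satisfies PROP-Max if $V_i(\pi)\ge\frac1n\sum_{a\in A}V_i^{max}(a)$ for all $i$, and PROP-Ave if $V_i(\pi)\ge\frac1n\sum_{a\in A}\sum_{j\in N}V_i(j,a)$ for all $i$. *)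

theory Defs
  imports Complex_Main
begin

(* V i j a = value of agent i when item a goes to agent j. *)

definition complete_allocation :: "'n set \<Rightarrow> 'a set \<Rightarrow> ('a \<Rightarrow> 'n) \<Rightarrow> bool" where
  "complete_allocation N A \<pi> \<longleftrightarrow> (\<forall>a\<in>A. \<pi> a \<in> N)"

definition alloc_value :: "('n \<Rightarrow> 'n \<Rightarrow> 'a \<Rightarrow> real) \<Rightarrow> 'a set \<Rightarrow> 'n \<Rightarrow> ('a \<Rightarrow> 'n) \<Rightarrow> real" where
  "alloc_value V A i \<pi> = (\<Sum>a\<in>A. V i (\<pi> a) a)"

definition swap_bundles :: "('a \<Rightarrow> 'n) \<Rightarrow> 'n \<Rightarrow> 'n \<Rightarrow> ('a \<Rightarrow> 'n)" where
  "swap_bundles \<pi> i j = (\<lambda>a. if \<pi> a = i then j else if \<pi> a = j then i else \<pi> a)"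

definition envy_free :: "'n set \<Rightarrow> 'a set \<Rightarrow> ('n \<Rightarrow> 'n \<Rightarrow> 'a \<Rightarrow> real) \<Rightarrow> ('a \<Rightarrow> 'n) \<Rightarrow> bool" where
  "envy_free N A V \<pi> \<longleftrightarrow>
     (\<forall>i\<in>N. \<forall>j\<in>N. \<not> (alloc_value V A i (swap_bundles \<pi> i j) > alloc_value V A i \<pi>))"

definition V_max :: "'n set \<Rightarrow> ('n \<Rightarrow> 'n \<Rightarrow> 'a \<Rightarrow> real) \<Rightarrow> 'n \<Rightarrow> 'a \<Rightarrow> real" where
  "V_max N V i a = Max ((\<lambda>j. V i j a) ` N)"

definition prop_max :: "'n set \<Rightarrow> 'a set \<Rightarrow> ('n \<Rightarrow> 'n \<Rightarrow> 'a \<Rightarrow> real) \<Rightarrow> ('a \<Rightarrow> 'n) \<Rightarrow> bool" where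
  "prop_max N A V \<pi> \<longleftrightarrow>
     (\<forall>i\<in>N. alloc_value V A i \<pi> \<ge> (1 / real (card N)) * (\<Sum>a\<in>A. V_max N V i a))"

definition prop_ave :: "'n set \<Rightarrow> 'a set \<Rightarrow> ('n \<Rightarrow> 'n \<Rightarrow> 'a \<Rightarrow> real) \<Rightarrow> ('a \<Rightarrow> 'n) \<Rightarrow> bool" where
  "prop_ave N A V \<pi> \<longleftrightarrow>
     (\<forall>i\<in>N. alloc_value V A i \<pi> \<ge> (1 / real (card N)) * (\<Sum>a\<in>A. \<Sum>j\<in>N. V i j a))"

end

theory Submission
  imports Defs
begin

(* A single item 0 goes to agent 3, while agent 1 values it only when agent 2 holds it.
   Agent 1 owns nothing, so no swap involving agent 1 hands the item to agent 2: every
   agent is envy-free, yet agent 1 gets 0, below both proportional shares of 1/3. *)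

definition externality_valuation :: "nat \<Rightarrow> nat \<Rightarrow> nat \<Rightarrow> real" where
  "externality_valuation i j a = (if i = 1 \<and> j = 2 then 1 else 0)"

definition allocation_to_3 :: "nat \<Rightarrow> nat" where
  "allocation_to_3 a = 3"

lemma externality_valuation_nonneg: "externality_valuation i j a \<ge> 0"
  by (simp add: externality_valuation_def)

lemma complete_allocation_to_3: "complete_allocation {1,2,3} {0} allocation_to_3"
  by (simp add: complete_allocation_def allocation_to_3_def)

lemma envy_free_allocation_to_3:
  "envy_free {1,2,3} {0} externality_valuation allocation_to_3"
  by (simp add: envy_free_def alloc_value_def swap_bundles_def
      externality_valuation_def allocation_to_3_def)

lemma not_prop_max_allocation_to_3:
  "\<not> prop_max {1,2,3} {0} externality_valuation allocation_to_3"
  by (simp add: prop_max_def alloc_value_def V_max_def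
      externality_valuation_def allocation_to_3_def)

lemma not_prop_ave_allocation_to_3:
  "\<not> prop_ave {1,2,3} {0} externality_valuation allocation_to_3"
  by (simp add: prop_ave_def alloc_value_def externality_valuation_def allocation_to_3_def)

theorem proposition3:
  shows "\<exists>(A :: nat set) (V :: nat \<Rightarrow> nat \<Rightarrow> nat \<Rightarrow> real) (\<pi> :: nat \<Rightarrow> nat).
           finite A \<and>
           (\<forall>i\<in>{1,2,3}. \<forall>j\<in>{1,2,3}. \<forall>a\<in>A. V i j a \<ge> 0) \<and>
           complete_allocation {1,2,3} A \<pi> \<and>
           envy_free {1,2,3} A V \<pi> \<and>
           \<not> prop_max {1,2,3} A V \<pi> \<and>
           \<not> prop_ave {1,2,3} A V \<pi>"
  using externality_valuation_nonneg complete_allocation_to_3 envy_free_allocation_to_3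
    not_prop_max_allocation_to_3 not_prop_ave_allocation_to_3
  by blast

end
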